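(* Let $\alpha\in(0,\tfrac12)$. For every sufficiently large $\nu$ (depending on $\alpha$), $$\mathbb P\big(D_{i_{\max},j}=0\ \text{for all } j=0,\dots,n_{i_{\max}}-1\big)=1-o(n^{-1/2})\quad\text{as } n\to\infty.$$
   Context: KPKVB setting: fix $\alpha>0$, $\nu>0$, an integer $n>\nu$, and $R=2\ln(n/\nu)$. $\mathcal D_R$ is the hyperbolic disk (curvature $-1$) of radius $R$ around the origin, with polar coordinates $(r,\theta)$, $r\in[0,R)$, $\theta\in(0,2\pi]$; $f_{\alpha,R}(r,\theta)=\frac{\alpha\sinh(\alpha r)}{2\pi(\cosh(\alpha R)-1)}$. $\mathcal P$ is a Poisson point process on $\mathcal D_R$ with intensity measure $n f_{\alpha,R}(r,\theta)\,dr\,d\theta$. Tiling: $i_{\max}=\lceil 0.9R/(2\ln 2)\rceil$, $n_i=2^{4-i+\lfloor R/(2\ln 2)\rfloor}$ for integers $0\le i\le i_{\max}$; $(i,j)$ is admissible if $0\le i\le i_{\max}$, $0\le j<n_i$; $T_{i,j}=\{(r,\theta)\in\mathcal D_R:\ R-2(i+1)\ln 2\le r<R-2i\ln 2,\ 2\pi j/n_i<\theta\le 2\pi(j+1)/n_i\}$. $N(T_{i,j})=|\mathcal P\cap T_{i,j}|$. Demands: $D_{0,j}=N(T_{0,j})$ if $N(T_{0,j})\in\{1,2\}$ and $D_{0,j}=0$ otherwise; for $0<i\le i_{\max}$, $D_{i,j}=\max\{D_{i-1,2j}+D_{i-1,2j+1}+3-N(T_{i,j}),0\}$. *)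

theory Defs
  imports "HOL-Probability.Probability" "HOL-Library.Landau_Symbols"
begin

definition kpkvb_R :: "real \<Rightarrow> nat \<Rightarrow> real" where
  "kpkvb_R \<nu> n = 2 * ln (real n / \<nu>)"

definition kpkvb_f :: "real \<Rightarrow> real \<Rightarrow> real \<Rightarrow> real \<Rightarrow> real" where
  "kpkvb_f \<alpha> R r \<theta> = \<alpha> * sinh (\<alpha> * r) / (2 * pi * (cosh (\<alpha> * R) - 1))"

definition disk :: "real \<Rightarrow> (real \<times> real) set" where
  "disk R = {(r, \<theta>). 0 \<le> r \<and> r < R \<and> 0 < \<theta> \<and> \<theta> \<le> 2 * pi}"

definition intensity :: "real \<Rightarrow> real \<Rightarrow> nat \<Rightarrow> (real \<times> real) measure" where
  "intensity \<alpha> \<nu> n = density (lborel \<Otimes>\<^sub>M lborel)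
     (\<lambda>(r, \<theta>). ennreal (real n * kpkvb_f \<alpha> (kpkvb_R \<nu> n) r \<theta>
                         * indicator (disk (kpkvb_R \<nu> n)) (r, \<theta>)))"

definition i_max :: "real \<Rightarrow> nat \<Rightarrow> nat" where
  "i_max \<nu> n = nat \<lceil>0.9 * kpkvb_R \<nu> n / (2 * ln 2)\<rceil>"

text \<open>n_i = 2^(4 - i + floor(R/(2 ln 2))) (the exponent is positive whenever i <= i_max and R
  is large; it is truncated at 0 otherwise).\<close>
definition n_tiles :: "real \<Rightarrow> nat \<Rightarrow> nat \<Rightarrow> nat" where
  "n_tiles \<nu> n i = 2 ^ nat (4 - int i + \<lfloor>kpkvb_R \<nu> n / (2 * ln 2)\<rfloor>)"

definition admissible :: "real \<Rightarrow> nat \<Rightarrow> (nat \<times> nat) set" where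
  "admissible \<nu> n = {(i, j). i \<le> i_max \<nu> n \<and> j < n_tiles \<nu> n i}"

definition tile :: "real \<Rightarrow> nat \<Rightarrow> nat \<Rightarrow> nat \<Rightarrow> (real \<times> real) set" where
  "tile \<nu> n i j = {(r, \<theta>) \<in> disk (kpkvb_R \<nu> n).
      kpkvb_R \<nu> n - 2 * (real i + 1) * ln 2 \<le> r \<and> r < kpkvb_R \<nu> n - 2 * real i * ln 2 \<and>
      2 * pi * real j / real (n_tiles \<nu> n i) < \<theta> \<and>
      \<theta> \<le> 2 * pi * (real j + 1) / real (n_tiles \<nu> n i)}"

definition pois :: "real \<Rightarrow> nat pmf" where
  "pois \<mu> = (if 0 < \<mu> then poisson_pmf \<mu> else return_pmf 0)"

text \<open>Joint law of the tile counts N(T_{i,j}), (i,j) admissible, under the Poisson point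
  process with the given intensity: the tiles are pairwise disjoint, so the counts are independent
  Poisson variables with means the intensity measures of the tiles.\<close>
definition tile_counts :: "real \<Rightarrow> real \<Rightarrow> nat \<Rightarrow> (nat \<times> nat \<Rightarrow> nat) pmf" where
  "tile_counts \<alpha> \<nu> n = Pi_pmf (admissible \<nu> n) 0
     (\<lambda>(i, j). pois (enn2real (emeasure (intensity \<alpha> \<nu> n) (tile \<nu> n i j))))"

fun demand :: "(nat \<times> nat \<Rightarrow> nat) \<Rightarrow> nat \<Rightarrow> nat \<Rightarrow> nat" where
  "demand N 0 j = (if N (0, j) \<in> {1, 2} then N (0, j) else 0)"
| "demand N (Suc i) j =
     nat (max (int (demand N i (2 * j)) + int (demand N i (2 * j + 1)) + 3 - int (N (Suc i, j))) 0)"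

definition all_top_demands_zero :: "real \<Rightarrow> nat \<Rightarrow> (nat \<times> nat \<Rightarrow> nat) set" where
  "all_top_demands_zero \<nu> n =
     {N. \<forall>j < n_tiles \<nu> n (i_max \<nu> n). demand N (i_max \<nu> n) j = 0}"

end

theory Submission
  imports Defs "HOL-Real_Asymp.Real_Asymp"
begin

text \<open>
  The tile counts are independent Poisson variables, and a tile at level i has mean at least
  K 2 powr ((1 - 2 alpha) i) with K = nu alpha ln 2 / 64. The recursion D = max (D' + D'' + 3 - N) 0 gives
  exp D \<le> 1 + e^3 exp (-N) exp D' exp D'', and the three factors are independent because they depend
  on disjoint subtrees of tiles. So, by induction along the tree, E exp D \<le> 2 for every demand as soon
  as E exp (-N) \<le> e^-5 for every tile, and Markov's inequality bounds P (D_{i_max,j} \<noteq> 0) by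
  4 e^2 E exp (-N) for the top tile. Since i_max \<ge> 0.9 R / (2 ln 2), the top tiles have mean of order
  K (n/nu) powr (0.9 (1 - 2 alpha)), and a union bound over at most 16 n/nu of them leaves a
  stretched-exponentially small failure probability.
\<close>

definition exp_neg_moment :: "nat pmf \<Rightarrow> ennreal" where
  "exp_neg_moment M = (\<integral>\<^sup>+ y. ennreal (exp (- real y)) \<partial>measure_pmf M)"

lemma exp_neg_moment_poisson:
  assumes "0 < \<mu>"
  shows "exp_neg_moment (poisson_pmf \<mu>) = ennreal (exp (- (1 - exp (-1)) * \<mu>))"
proof -
  have "exp_neg_moment (poisson_pmf \<mu>) = (\<Sum>k. ennreal (exp (-\<mu>) * ((\<mu> * exp (-1)) ^ k / fact k)))"
    using assms unfolding exp_neg_moment_def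
    by (simp add: nn_integral_measure_pmf nn_integral_count_space_nat ennreal_mult'[symmetric]
        power_mult_distrib exp_of_nat_mult[symmetric] field_simps flip: exp_minus_inverse)
  also have "\<dots> = ennreal (exp (-\<mu>) * exp (\<mu> * exp (-1)))"
  proof (rule suminf_ennreal_eq)
    show "(\<lambda>k. exp (-\<mu>) * ((\<mu> * exp (-1)) ^ k / fact k)) sums (exp (-\<mu>) * exp (\<mu> * exp (-1)))"
      using sums_mult[OF exp_converges[of "\<mu> * exp (-1)"], of "exp (-\<mu>)"]
      by (simp add: divide_inverse mult.commute)
  qed (use assms in simp)
  also have "exp (-\<mu>) * exp (\<mu> * exp (-1)) = exp (- (1 - exp (-1)) * \<mu>)"
    by (subst exp_add[symmetric]) (simp add: algebra_simps)
  finally show ?thesis .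
qed

lemma exp_neg_moment_pois_le:
  assumes "0 < \<mu>" "M \<le> \<mu>"
  shows "exp_neg_moment (pois \<mu>) \<le> ennreal (exp (- (1 - exp (-1)) * M))"
proof -
  have "(1 - exp (-1)) * M \<le> (1 - exp (-1)) * \<mu>" by (intro mult_left_mono assms(2)) simp
  then show ?thesis
    using assms(1) by (simp add: pois_def exp_neg_moment_poisson)
qed

lemma nn_integral_Pi_pmf_union_mult:
  fixes F G :: "('a \<Rightarrow> 'b) \<Rightarrow> ennreal"
  assumes "finite A" "finite B" "A \<inter> B = {}"
    and F: "\<And>f g. (\<And>x. x \<in> A \<Longrightarrow> f x = g x) \<Longrightarrow> F f = F g"
    and G: "\<And>f g. (\<And>x. x \<in> B \<Longrightarrow> f x = g x) \<Longrightarrow> G f = G g"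
  shows "(\<integral>\<^sup>+ f. F f * G f \<partial>measure_pmf (Pi_pmf (A \<union> B) d p))
       = (\<integral>\<^sup>+ f. F f \<partial>measure_pmf (Pi_pmf A d p)) * (\<integral>\<^sup>+ f. G f \<partial>measure_pmf (Pi_pmf B d p))"
proof -
  let ?h = "\<lambda>(f::'a\<Rightarrow>'b, g::'a\<Rightarrow>'b) x. if x \<in> A then f x else g x"
  have F_h: "F (?h (f, g)) = F f" for f g by (rule F) auto
  have G_h: "G (?h (f, g)) = G g" for f g by (rule G) (use assms(3) in auto)
  have "Pi_pmf (A \<union> B) d p = map_pmf ?h (pair_pmf (Pi_pmf A d p) (Pi_pmf B d p))"
    by (rule Pi_pmf_union) (fact assms)+
  then have "(\<integral>\<^sup>+ f. F f * G f \<partial>measure_pmf (Pi_pmf (A \<union> B) d p))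
     = (\<integral>\<^sup>+ f. \<integral>\<^sup>+ g. F (?h (f, g)) * G (?h (f, g)) \<partial>measure_pmf (Pi_pmf B d p) \<partial>measure_pmf (Pi_pmf A d p))"
    by (simp add: nn_integral_pair_pmf')
  also have "\<dots> = (\<integral>\<^sup>+ f. F f * (\<integral>\<^sup>+ g. G g \<partial>measure_pmf (Pi_pmf B d p)) \<partial>measure_pmf (Pi_pmf A d p))"
    by (simp only: F_h G_h) (simp add: nn_integral_cmult)
  also have "\<dots> = (\<integral>\<^sup>+ f. F f \<partial>measure_pmf (Pi_pmf A d p)) * (\<integral>\<^sup>+ f. G f \<partial>measure_pmf (Pi_pmf B d p))"
    by (simp add: nn_integral_multc)
  finally show ?thesis .
qed

lemma prob_Pi_pmf_subset_local:
  assumes "finite A" "B \<subseteq> A" and local: "\<And>f g. (\<And>x. x \<in> B \<Longrightarrow> f x = g x) \<Longrightarrow> P f = P g"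
  shows "measure_pmf.prob (Pi_pmf A d p) {f. P f} = measure_pmf.prob (Pi_pmf B d p) {f. P f}"
proof -
  let ?r = "\<lambda>f x. if x \<in> B then f x else d"
  have "Pi_pmf B d p = map_pmf ?r (Pi_pmf A d p)"
    by (rule Pi_pmf_subset) (fact assms)+
  moreover have "?r -` {f. P f} = {f. P f}"
    using local[of "?r _"] by auto
  ultimately show ?thesis by simp
qed

fun subtree :: "nat \<Rightarrow> nat \<Rightarrow> (nat \<times> nat) set" where
  "subtree 0 j = {(0, j)}"
| "subtree (Suc i) j = insert (Suc i, j) (subtree i (2 * j) \<union> subtree i (2 * j + 1))"

lemma finite_subtree [simp]: "finite (subtree i j)"
  by (induction i arbitrary: j) auto

lemma mem_subtreeD: "(k, l) \<in> subtree i j \<Longrightarrow> k \<le> i \<and> l div 2 ^ (i - k) = j"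
proof (induction i arbitrary: j)
  case (Suc i)
  show ?case
  proof (cases "(k, l) = (Suc i, j)")
    case False
    then obtain j' where j': "j' div 2 = j" "(k, l) \<in> subtree i j'"
      using Suc.prems by (auto intro: that[of "2 * j"] that[of "2 * j + 1"])
    with Suc.IH have "k \<le> i" "l div 2 ^ (i - k) = j'" by auto
    moreover have "l div 2 ^ (Suc i - k) = l div 2 ^ (i - k) div 2"
      using \<open>k \<le> i\<close> by (simp add: Suc_diff_le div_mult2_eq[symmetric] mult.commute)
    ultimately show ?thesis using j'(1) by simp
  qed simp
qed simp

lemma subtree_children_disjoint: "subtree i (2 * j) \<inter> subtree i (2 * j + 1) = {}"
  using mem_subtreeD[of _ _ i "2 * j"] mem_subtreeD[of _ _ i "2 * j + 1"] by fastforce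

lemma root_notin_subtree: "(Suc i, j) \<notin> subtree i j'"
  using mem_subtreeD[of "Suc i" j i j'] by auto

lemma demand_cong_subtree:
  "(\<And>x. x \<in> subtree i j \<Longrightarrow> N x = N' x) \<Longrightarrow> demand N i j = demand N' i j"
proof (induction i arbitrary: j)
  case (Suc i)
  have "demand N i (2*j) = demand N' i (2*j)" "demand N i (2*j+1) = demand N' i (2*j+1)"
    by (rule Suc.IH; use Suc.prems in auto)+
  moreover have "N (Suc i, j) = N' (Suc i, j)" using Suc.prems by auto
  ultimately show ?case by simp
qed simp

definition demand_mgf :: "nat \<Rightarrow> (nat \<times> nat \<Rightarrow> nat pmf) \<Rightarrow> nat \<Rightarrow> nat \<Rightarrow> ennreal" where
  "demand_mgf d p i j = (\<integral>\<^sup>+ N. ennreal (exp (real (demand N i j))) \<partial>measure_pmf (Pi_pmf (subtree i j) d p))"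

definition demand_excess :: "(nat \<times> nat \<Rightarrow> nat) \<Rightarrow> nat \<Rightarrow> nat \<Rightarrow> real" where
  "demand_excess N i j = real (demand N i (2*j)) + real (demand N i (2*j+1)) + 3 - real (N (Suc i, j))"

lemma real_demand_Suc: "real (demand N (Suc i) j) = max (demand_excess N i j) 0"
  by (simp add: demand_excess_def)

lemma nn_integral_exp_demand_excess:
  "(\<integral>\<^sup>+ N. ennreal (exp (demand_excess N i j)) \<partial>measure_pmf (Pi_pmf (subtree (Suc i) j) d p))
   = ennreal (exp 3) * exp_neg_moment (p (Suc i, j)) * (demand_mgf d p i (2*j) * demand_mgf d p i (2*j+1))"
proof -
  let ?A = "subtree i (2*j)" and ?B = "subtree i (2*j+1)"
  let ?top = "\<lambda>N. ennreal (exp 3 * exp (- real (N (Suc i, j))))"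
  let ?D = "\<lambda>j N. ennreal (exp (real (demand N i j)))"
  have split: "subtree (Suc i) j = {(Suc i, j)} \<union> (?A \<union> ?B)" by simp
  have "exp (demand_excess N i j)
      = exp 3 * exp (- real (N (Suc i, j))) * (exp (real (demand N i (2*j))) * exp (real (demand N i (2*j+1))))"
    for N by (simp add: demand_excess_def exp_diff exp_add exp_minus field_simps)
  then have integrand: "ennreal (exp (demand_excess N i j)) = ?top N * (?D (2*j) N * ?D (2*j+1) N)" for N
    by (simp add: ennreal_mult)
  have "(\<integral>\<^sup>+ N. ennreal (exp (demand_excess N i j)) \<partial>measure_pmf (Pi_pmf (subtree (Suc i) j) d p))
     = (\<integral>\<^sup>+ N. ?top N \<partial>measure_pmf (Pi_pmf {(Suc i, j)} d p))
       * (\<integral>\<^sup>+ N. ?D (2*j) N * ?D (2*j+1) N \<partial>measure_pmf (Pi_pmf (?A \<union> ?B) d p))"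
  proof (unfold integrand split, rule nn_integral_Pi_pmf_union_mult)
    show "?D (2*j) N * ?D (2*j+1) N = ?D (2*j) N' * ?D (2*j+1) N'"
      if "\<And>x. x \<in> ?A \<union> ?B \<Longrightarrow> N x = N' x" for N N'
      using demand_cong_subtree[of i "2*j" N N'] demand_cong_subtree[of i "2*j+1" N N'] that by simp
  qed (use root_notin_subtree in auto)
  also have "(\<integral>\<^sup>+ N. ?D (2*j) N * ?D (2*j+1) N \<partial>measure_pmf (Pi_pmf (?A \<union> ?B) d p))
     = demand_mgf d p i (2*j) * demand_mgf d p i (2*j+1)"
    unfolding demand_mgf_def
    by (rule nn_integral_Pi_pmf_union_mult[OF _ _ subtree_children_disjoint])
       (auto intro!: arg_cong[where f = ennreal] demand_cong_subtree)
  also have "(\<integral>\<^sup>+ N. ?top N \<partial>measure_pmf (Pi_pmf {(Suc i, j)} d p))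
     = ennreal (exp 3) * exp_neg_moment (p (Suc i, j))"
    by (simp add: Pi_pmf_singleton exp_neg_moment_def ennreal_mult nn_integral_cmult)
  finally show ?thesis .
qed

lemma nn_integral_exp_demand_excess_le:
  assumes "demand_mgf d p i (2*j) \<le> 2" "demand_mgf d p i (2*j+1) \<le> 2"
    and "exp_neg_moment (p (Suc i, j)) \<le> ennreal q" "0 \<le> q"
  shows "(\<integral>\<^sup>+ N. ennreal (exp (demand_excess N i j)) \<partial>measure_pmf (Pi_pmf (subtree (Suc i) j) d p))
         \<le> ennreal (4 * exp 3 * q)"
proof -
  have "ennreal (exp 3) * exp_neg_moment (p (Suc i, j)) * (demand_mgf d p i (2*j) * demand_mgf d p i (2*j+1))
     \<le> ennreal (exp 3) * ennreal q * (2 * 2)"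
    using assms by (intro mult_mono) auto
  also have "\<dots> = ennreal (4 * exp 3 * q)"
    using \<open>0 \<le> q\<close> by (simp add: ennreal_mult mult_ac)
  finally show ?thesis unfolding nn_integral_exp_demand_excess .
qed

lemma nn_integral_pmf_one_plus:
  fixes f :: "'a \<Rightarrow> real"
  assumes "\<And>x. 0 \<le> f x"
  shows "(\<integral>\<^sup>+ x. ennreal (1 + f x) \<partial>measure_pmf M) = 1 + (\<integral>\<^sup>+ x. ennreal (f x) \<partial>measure_pmf M)"
proof -
  have "(\<integral>\<^sup>+ x. ennreal (1 + f x) \<partial>measure_pmf M) = (\<integral>\<^sup>+ x. 1 + ennreal (f x) \<partial>measure_pmf M)"
    using assms by (simp add: ennreal_plus)
  also have "\<dots> = 1 + (\<integral>\<^sup>+ x. ennreal (f x) \<partial>measure_pmf M)"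
    by (subst nn_integral_add) (auto simp: measure_pmf.emeasure_space_1)
  finally show ?thesis .
qed

lemma demand_mgf_0_le:
  assumes "exp_neg_moment (p (0, j)) \<le> ennreal q" "0 \<le> q"
  shows "demand_mgf d p 0 j \<le> ennreal (1 + exp 4 * q)"
proof -
  have leaf: "exp (real (if y \<in> {1, 2} then y else 0)) \<le> 1 + exp 4 * exp (- real y)" for y :: nat
  proof (cases "y \<in> {1, 2}")
    case True
    then have "exp (real y) \<le> exp 4 * exp (- real y)" by (auto simp: exp_add[symmetric])
    then show ?thesis using True by simp
  qed simp
  have "demand_mgf d p 0 j = (\<integral>\<^sup>+ y. ennreal (exp (real (if y \<in> {1, 2} then y else 0))) \<partial>measure_pmf (p (0, j)))"
    by (simp add: demand_mgf_def Pi_pmf_singleton cong: if_cong)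
  also have "\<dots> \<le> (\<integral>\<^sup>+ y. ennreal (1 + exp 4 * exp (- real y)) \<partial>measure_pmf (p (0, j)))"
    by (intro nn_integral_mono ennreal_leI leaf)
  also have "\<dots> = 1 + ennreal (exp 4) * exp_neg_moment (p (0, j))"
    by (subst nn_integral_pmf_one_plus) (auto simp: exp_neg_moment_def ennreal_mult nn_integral_cmult)
  also have "\<dots> \<le> 1 + ennreal (exp 4) * ennreal q"
    using assms(1) by (intro add_left_mono mult_left_mono) auto
  also have "\<dots> = ennreal (1 + exp 4 * q)" using assms(2) by (simp add: ennreal_mult ennreal_plus)
  finally show ?thesis .
qed

lemma demand_mgf_le_2:
  assumes "\<forall>x\<in>subtree i j. exp_neg_moment (p x) \<le> ennreal q" "0 \<le> q" "q \<le> exp (-5)"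
  shows "demand_mgf d p i j \<le> 2"
  using assms(1)
proof (induction i arbitrary: j)
  case 0
  have "demand_mgf d p 0 j \<le> ennreal (1 + exp 4 * q)"
    using "0.prems" \<open>0 \<le> q\<close> by (intro demand_mgf_0_le) auto
  also have "\<dots> \<le> 2"
  proof -
    have "exp 4 * q \<le> exp 4 * exp (-5)" using \<open>q \<le> exp (-5)\<close> by (intro mult_left_mono) auto
    also have "\<dots> \<le> 1" by (simp flip: exp_add)
    finally show ?thesis using ennreal_leI[of "1 + exp 4 * q" 2] by simp
  qed
  finally show ?case .
next
  case (Suc i)
  have children: "demand_mgf d p i (2*j) \<le> 2" "demand_mgf d p i (2*j+1) \<le> 2"
    by (rule Suc.IH; use Suc.prems in auto)+
  have "exp (max x 0) \<le> 1 + exp x" for x :: real by (cases "x \<le> 0") (auto simp: max_def)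
  then have "demand_mgf d p (Suc i) j
      \<le> (\<integral>\<^sup>+ N. ennreal (1 + exp (demand_excess N i j)) \<partial>measure_pmf (Pi_pmf (subtree (Suc i) j) d p))"
    unfolding demand_mgf_def real_demand_Suc by (intro nn_integral_mono ennreal_leI)
  also have "\<dots> \<le> 1 + ennreal (4 * exp 3 * q)"
    unfolding nn_integral_pmf_one_plus[OF exp_ge_zero]
    using children Suc.prems \<open>0 \<le> q\<close> by (intro add_left_mono nn_integral_exp_demand_excess_le) auto
  also have "\<dots> \<le> 2"
  proof -
    have "4 * exp 3 * q \<le> 4 * exp 3 * exp (-5)" using \<open>q \<le> exp (-5)\<close> by (intro mult_left_mono) auto
    also have "\<dots> = 4 / exp 2" by (simp add: exp_add[symmetric] exp_minus field_simps)
    also have "\<dots> \<le> 1"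
      using mult_mono[of 2 "exp 1" 2 "exp (1::real)"] exp_ge_add_one_self[of 1] by (simp flip: exp_add)
    finally show ?thesis using \<open>0 \<le> q\<close> ennreal_leI[of "1 + 4 * exp 3 * q" 2] by (simp add: ennreal_plus)
  qed
  finally show ?case .
qed

lemma prob_demand_Suc_nonzero_le:
  assumes "demand_mgf d p i (2*j) \<le> 2" "demand_mgf d p i (2*j+1) \<le> 2"
    and "exp_neg_moment (p (Suc i, j)) \<le> ennreal q" "0 \<le> q"
  shows "measure_pmf.prob (Pi_pmf (subtree (Suc i) j) d p) {N. demand N (Suc i) j \<noteq> 0} \<le> 4 * exp 2 * q"
proof -
  let ?M = "measure_pmf (Pi_pmf (subtree (Suc i) j) d p)"
  have "indicator {N. demand N (Suc i) j \<noteq> 0} N \<le> ennreal (exp (-1)) * ennreal (exp (demand_excess N i j))"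
    for N
  proof (cases "demand N (Suc i) j = 0")
    case False
    then have "1 \<le> demand_excess N i j" using real_demand_Suc[of N i j] by linarith
    then have "1 \<le> exp (-1) * exp (demand_excess N i j)" by (simp flip: exp_add)
    then show ?thesis using False ennreal_leI by (fastforce simp: ennreal_mult[symmetric])
  qed simp
  then have "emeasure ?M {N. demand N (Suc i) j \<noteq> 0}
      \<le> ennreal (exp (-1)) * (\<integral>\<^sup>+ N. ennreal (exp (demand_excess N i j)) \<partial>?M)"
    by (subst nn_integral_cmult[symmetric]) (auto intro!: nn_integral_mono simp flip: nn_integral_indicator)
  also have "\<dots> \<le> ennreal (exp (-1)) * ennreal (4 * exp 3 * q)"
    using assms by (intro mult_left_mono nn_integral_exp_demand_excess_le) auto
  also have "\<dots> = ennreal (4 * exp 2 * q)"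
    using \<open>0 \<le> q\<close> by (simp add: ennreal_mult[symmetric] exp_add[symmetric] mult_ac)
  finally show ?thesis using \<open>0 \<le> q\<close> by (simp add: measure_pmf.emeasure_eq_measure ennreal_le_iff)
qed

lemma one_minus_prob_top_demands_zero_le:
  assumes "finite A" "\<And>j. j < T \<Longrightarrow> subtree (Suc m) j \<subseteq> A"
    and "\<And>x. x \<in> A \<Longrightarrow> exp_neg_moment (p x) \<le> ennreal (exp (-5))"
    and "\<And>j. j < T \<Longrightarrow> exp_neg_moment (p (Suc m, j)) \<le> ennreal q" "0 \<le> q"
  shows "1 - measure_pmf.prob (Pi_pmf A d p) {N. \<forall>j<T. demand N (Suc m) j = 0} \<le> real T * (4 * exp 2 * q)"
proof -
  let ?P = "Pi_pmf A d p"
  let ?E = "\<lambda>j. {N. demand N (Suc m) j \<noteq> 0}"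
  have each: "measure_pmf.prob ?P (?E j) \<le> 4 * exp 2 * q" if "j < T" for j
  proof -
    have "measure_pmf.prob ?P (?E j) = measure_pmf.prob (Pi_pmf (subtree (Suc m) j) d p) (?E j)"
      using assms(1) assms(2)[OF that] by (rule prob_Pi_pmf_subset_local) (metis demand_cong_subtree)
    also have "\<dots> \<le> 4 * exp 2 * q"
      using assms(2)[OF that] assms(3) assms(4)[OF that] assms(5)
      by (intro prob_demand_Suc_nonzero_le demand_mgf_le_2[where q = "exp (-5)"]) auto
    finally show ?thesis .
  qed
  have "{N. \<forall>j<T. demand N (Suc m) j = 0} = UNIV - (\<Union>j<T. ?E j)" by auto
  then have "1 - measure_pmf.prob ?P {N. \<forall>j<T. demand N (Suc m) j = 0} = measure_pmf.prob ?P (\<Union>j<T. ?E j)"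
    using measure_pmf.prob_compl[of "\<Union>j<T. ?E j" ?P] by simp
  also have "\<dots> \<le> (\<Sum>j<T. measure_pmf.prob ?P (?E j))"
    by (rule measure_pmf.finite_measure_subadditive_finite) auto
  also have "\<dots> \<le> (\<Sum>j<T. 4 * exp 2 * q)"
    by (intro sum_mono each) simp
  finally show ?thesis by simp
qed

lemma emeasure_intensity_box:
  fixes \<alpha> \<nu> :: real and n :: nat
  assumes "0 < \<alpha>" "0 \<le> a" "a < b" "t1 < t2" and box: "{a..<b} \<times> {t1<..t2} \<subseteq> disk (kpkvb_R \<nu> n)"
  shows "ennreal (real n * kpkvb_f \<alpha> (kpkvb_R \<nu> n) a 0 * ((b-a)*(t2-t1)))
           \<le> emeasure (intensity \<alpha> \<nu> n) ({a..<b} \<times> {t1<..t2})"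
    and "emeasure (intensity \<alpha> \<nu> n) ({a..<b} \<times> {t1<..t2})
           \<le> ennreal (real n * kpkvb_f \<alpha> (kpkvb_R \<nu> n) b 0 * ((b-a)*(t2-t1)))"
proof -
  define R where "R = kpkvb_R \<nu> n"
  define S where "S = {a..<b} \<times> {t1<..t2::real}"
  define c where "c = (\<lambda>r. real n * kpkvb_f \<alpha> R r 0)"
  have "(a, t2) \<in> disk R" using box assms unfolding R_def by auto
  then have "0 < \<alpha> * R" using assms by (simp add: disk_def)
  then have "0 < cosh (\<alpha> * R) - 1" using cosh_real_nonneg_less_iff[of 0 "\<alpha> * R"] by simp
  then have c_mono: "0 \<le> c r \<and> c r \<le> c r'" if "0 \<le> r" "r \<le> r'" for r r'
    using that assms(1) by (auto simp: c_def kpkvb_f_def intro!: divide_right_mono mult_left_mono)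
  have box_sets: "{x..<y} \<times> {u<..v} \<in> sets (lborel \<Otimes>\<^sub>M lborel :: (real \<times> real) measure)" for x y u v
    by (rule pair_measureI) auto
  have disk_sets [measurable]: "disk R \<in> sets (lborel \<Otimes>\<^sub>M lborel)"
  proof -
    have "disk R = {0..<R} \<times> {0<..2*pi}" by (auto simp: disk_def)
    then show ?thesis using box_sets by simp
  qed
  have sinh_measurable [measurable]: "(\<lambda>r::real. sinh (\<alpha>*r)) \<in> borel_measurable borel"
    by (intro borel_measurable_continuous_onI continuous_intros)
  have "emeasure (intensity \<alpha> \<nu> n) S
      = (\<integral>\<^sup>+ x. ennreal (real n * kpkvb_f \<alpha> R (fst x) (snd x) * indicator (disk R) x) * indicator S x
           \<partial>(lborel \<Otimes>\<^sub>M lborel))"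
    unfolding intensity_def R_def[symmetric] S_def
    by (subst emeasure_density) (auto simp: box_sets kpkvb_f_def case_prod_beta')
  also have "\<dots> = (\<integral>\<^sup>+ x. ennreal (c (fst x)) * indicator S x \<partial>(lborel \<Otimes>\<^sub>M lborel))"
    using box by (intro nn_integral_cong)
      (auto simp: S_def R_def c_def kpkvb_f_def indicator_def subset_iff)
  finally have density: "emeasure (intensity \<alpha> \<nu> n) S
      = (\<integral>\<^sup>+ x. ennreal (c (fst x)) * indicator S x \<partial>(lborel \<Otimes>\<^sub>M lborel))" .
  have integral_const: "(\<integral>\<^sup>+ x. ennreal (c r) * indicator S x \<partial>(lborel \<Otimes>\<^sub>M lborel))
      = ennreal (c r * ((b-a)*(t2-t1)))" if "0 \<le> r" for r
    using assms c_mono[OF that order.refl]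
    by (simp add: S_def nn_integral_cmult_indicator box_sets lborel.emeasure_pair_measure_Times
        ennreal_mult)
  have "ennreal (c a * ((b-a)*(t2-t1))) \<le> (\<integral>\<^sup>+ x. ennreal (c (fst x)) * indicator S x \<partial>(lborel \<Otimes>\<^sub>M lborel))"
    unfolding integral_const[OF assms(2), symmetric]
    using assms c_mono by (intro nn_integral_mono) (auto simp: S_def indicator_def intro!: ennreal_leI)
  then show "ennreal (real n * kpkvb_f \<alpha> (kpkvb_R \<nu> n) a 0 * ((b-a)*(t2-t1)))
      \<le> emeasure (intensity \<alpha> \<nu> n) ({a..<b} \<times> {t1<..t2})"
    unfolding S_def[symmetric] R_def[symmetric] density by (simp add: c_def)
  have "(\<integral>\<^sup>+ x. ennreal (c (fst x)) * indicator S x \<partial>(lborel \<Otimes>\<^sub>M lborel)) \<le> ennreal (c b * ((b-a)*(t2-t1)))"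
    unfolding integral_const[of b, symmetric, OF order.trans[OF assms(2) less_imp_le[OF assms(3)]]]
    using assms c_mono by (intro nn_integral_mono) (auto simp: S_def indicator_def intro!: ennreal_leI)
  then show "emeasure (intensity \<alpha> \<nu> n) ({a..<b} \<times> {t1<..t2})
      \<le> ennreal (real n * kpkvb_f \<alpha> (kpkvb_R \<nu> n) b 0 * ((b-a)*(t2-t1)))"
    unfolding S_def[symmetric] R_def[symmetric] density by (simp add: c_def)
qed

lemma i_max_bounds:
  assumes "0 \<le> kpkvb_R \<nu> n"
  shows "0.9 * kpkvb_R \<nu> n / (2 * ln 2) \<le> real (i_max \<nu> n)"
    and "real (i_max \<nu> n) < 0.9 * kpkvb_R \<nu> n / (2 * ln 2) + 1"
proof -
  let ?x = "0.9 * kpkvb_R \<nu> n / (2 * ln 2)"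
  have "real (i_max \<nu> n) = real_of_int \<lceil>?x\<rceil>"
    unfolding i_max_def using assms by simp
  then show "?x \<le> real (i_max \<nu> n)" "real (i_max \<nu> n) < ?x + 1"
    using ceiling_correct[of ?x] by linarith+
qed

lemma powr_2_kpkvb_R: "0 < real n / \<nu> \<Longrightarrow> 2 powr (kpkvb_R \<nu> n / (2 * ln 2)) = real n / \<nu>"
  unfolding kpkvb_R_def powr_def by simp

lemma n_tiles_exponent_pos:
  assumes "0 \<le> kpkvb_R \<nu> n" "i \<le> i_max \<nu> n"
  shows "1 \<le> 4 - int i + \<lfloor>kpkvb_R \<nu> n / (2 * ln 2)\<rfloor>"
proof -
  let ?y = "kpkvb_R \<nu> n / (2 * ln 2)"
  have "real i < 0.9 * ?y + 1"
    using assms i_max_bounds(2)[OF assms(1)] by simp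
  moreover have "?y - 1 < real_of_int \<lfloor>?y\<rfloor>" "0 \<le> ?y"
    using assms(1) by (linarith, simp)
  ultimately show ?thesis by linarith
qed

lemma n_tiles_Suc:
  assumes "0 \<le> kpkvb_R \<nu> n" "i \<le> i_max \<nu> n"
  shows "2 * n_tiles \<nu> n (Suc i) = n_tiles \<nu> n i"
proof -
  have "nat (4 - int i + \<lfloor>kpkvb_R \<nu> n / (2 * ln 2)\<rfloor>)
      = Suc (nat (4 - int (Suc i) + \<lfloor>kpkvb_R \<nu> n / (2 * ln 2)\<rfloor>))"
    using n_tiles_exponent_pos[OF assms] by simp
  then show ?thesis unfolding n_tiles_def by simp
qed

lemma n_tiles_le:
  assumes "0 \<le> kpkvb_R \<nu> n" "0 < real n / \<nu>" "i \<le> i_max \<nu> n"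
  shows "real (n_tiles \<nu> n i) \<le> 16 * (real n / \<nu>) / 2 powr real i"
proof -
  let ?y = "kpkvb_R \<nu> n / (2 * ln 2)"
  let ?e = "4 - int i + \<lfloor>?y\<rfloor>"
  have "real (n_tiles \<nu> n i) = 2 powr real_of_int ?e"
    unfolding n_tiles_def using n_tiles_exponent_pos[OF assms(1,3)] by (simp add: powr_realpow[symmetric])
  also have "\<dots> \<le> 2 powr (4 - real i + ?y)"
    by (intro powr_mono) auto
  also have "\<dots> = 16 * (real n / \<nu>) / 2 powr real i"
    using powr_2_kpkvb_R[OF assms(2)] by (simp add: powr_add powr_diff)
  finally show ?thesis .
qed

lemma i_max_pos:
  assumes "0 < kpkvb_R \<nu> n"
  shows "0 < i_max \<nu> n"
proof -
  have "0 < 0.9 * kpkvb_R \<nu> n / (2 * ln 2)" using assms by simp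
  then show ?thesis using i_max_bounds(1)[of \<nu> n] assms by linarith
qed

lemma n_tiles_i_max_le:
  assumes "0 \<le> kpkvb_R \<nu> n" "0 < real n / \<nu>"
  shows "real (n_tiles \<nu> n (i_max \<nu> n)) \<le> 16 * (real n / \<nu>)"
proof -
  have "real (n_tiles \<nu> n (i_max \<nu> n)) \<le> 16 * (real n / \<nu>) / 2 powr real (i_max \<nu> n)"
    using n_tiles_le assms by simp
  also have "\<dots> \<le> 16 * (real n / \<nu>)"
    using divide_left_mono[of 1 "2 powr real (i_max \<nu> n)" "16 * (real n / \<nu>)"] assms(2)
    by (simp add: ge_one_powr_ge_zero)
  finally show ?thesis .
qed

lemma finite_admissible: "finite (admissible \<nu> n)"
proof -
  have "admissible \<nu> n = (SIGMA i:{..i_max \<nu> n}. {..<n_tiles \<nu> n i})"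
    by (auto simp: admissible_def)
  then show ?thesis by simp
qed

lemma subtree_subset_admissible:
  assumes "0 \<le> kpkvb_R \<nu> n"
  shows "i \<le> i_max \<nu> n \<Longrightarrow> j < n_tiles \<nu> n i \<Longrightarrow> subtree i j \<subseteq> admissible \<nu> n"
proof (induction i arbitrary: j)
  case (Suc i)
  have "2 * j + 1 < n_tiles \<nu> n i"
    using Suc.prems n_tiles_Suc[OF assms, of i] by simp
  then have "subtree i (2*j) \<union> subtree i (2*j+1) \<subseteq> admissible \<nu> n"
    using Suc by simp
  then show ?case using Suc.prems by (simp add: admissible_def)
qed (simp add: admissible_def)

lemma tile_eq_box:
  assumes "j < n_tiles \<nu> n i" "0 \<le> kpkvb_R \<nu> n - 2 * (real i + 1) * ln 2"
  shows "tile \<nu> n i j = {kpkvb_R \<nu> n - 2 * (real i + 1) * ln 2 ..< kpkvb_R \<nu> n - 2 * real i * ln 2}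
           \<times> {2 * pi * real j / real (n_tiles \<nu> n i) <.. 2 * pi * (real j + 1) / real (n_tiles \<nu> n i)}"
proof -
  let ?N = "real (n_tiles \<nu> n i)"
  have "real j + 1 \<le> ?N" using assms(1) by linarith
  then have "(real j + 1) / ?N \<le> 1" by (simp add: divide_le_eq_1)
  then have upper: "2 * pi * (real j + 1) / ?N \<le> 2 * pi"
    using mult_left_mono[of "(real j + 1) / ?N" 1 "2 * pi"] by simp
  have lower: "0 \<le> 2 * pi * real j / ?N" "0 \<le> 2 * real i * ln 2" by simp_all
  show ?thesis
    unfolding tile_def disk_def using assms(2) upper by auto (use lower in linarith)+
qed

lemma exp_div_4_le_sinh:
  assumes "1 \<le> (x::real)"
  shows "exp x / 4 \<le> sinh x"
proof -
  have "2 \<le> exp (2*x)" using exp_ge_add_one_self[of "2*x"] assms by linarith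
  moreover have "exp (2*x) = exp x * exp x" by (metis exp_add mult_2)
  ultimately have "2 \<le> exp x * exp x" by simp
  then have "2 * exp (-x) \<le> exp x" by (simp add: exp_minus field_simps)
  then show ?thesis by (simp add: sinh_field_def)
qed

lemma cosh_minus_one_le_exp:
  assumes "0 \<le> (x::real)"
  shows "cosh x - 1 \<le> exp x"
proof -
  have "exp (-x) \<le> 1" "1 \<le> exp x" using assms by simp_all
  then have "exp x + exp (-x) - 2 \<le> 2 * exp x" by linarith
  then show ?thesis unfolding cosh_field_def by (simp add: field_simps)
qed

lemma tile_mean_ge_arith:
  fixes n \<nu> \<alpha> a R N :: real and i :: nat
  assumes "0 < n" "0 < \<nu>" "0 < \<alpha>" "\<alpha> < 1/2" "1 \<le> \<alpha> * a" "0 < \<alpha> * R"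
    and a: "a = R - 2 * (real i + 1) * ln 2"
    and "1 \<le> N" "N \<le> 16 * (n / \<nu>) / 2 powr real i"
  shows "\<nu> * \<alpha> * ln 2 / 64 * 2 powr ((1 - 2*\<alpha>) * real i)
      \<le> n * kpkvb_f \<alpha> R a 0 * (2 * ln 2 * (2 * pi / N))"
proof -
  define L where "L = ln (2::real)"
  have "0 < L" by (simp add: L_def)
  have cosh_pos: "0 < cosh (\<alpha>*R) - 1"
    using cosh_real_nonneg_less_iff[of 0 "\<alpha>*R"] assms by simp
  have "exp (\<alpha>*a) / exp (\<alpha>*R) = 2 powr (-2 * \<alpha> * (real i + 1))"
    unfolding powr_def a by (simp add: exp_diff[symmetric] algebra_simps)
  then have ratio: "exp (\<alpha>*a) / exp (\<alpha>*R) * 2 powr real i = 2 powr ((1 - 2*\<alpha>) * real i) * 2 powr (-2*\<alpha>)"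
    by (simp add: powr_add[symmetric] algebra_simps)
  have "2 powr (-1) \<le> 2 powr (-2*\<alpha>)" using assms by (intro powr_mono) auto
  then have "\<nu> * \<alpha> * L / 64 * 2 powr ((1 - 2*\<alpha>) * real i)
      \<le> \<nu> * \<alpha> * L / 32 * (2 powr ((1 - 2*\<alpha>) * real i) * 2 powr (-2*\<alpha>))"
    using assms \<open>0 < L\<close> by (simp add: powr_minus)
  also have "\<dots> = \<nu> * \<alpha> * L / 32 * (exp (\<alpha>*a) / exp (\<alpha>*R) * 2 powr real i)"
    by (simp only: ratio)
  also have "\<dots> = (n * \<alpha> * 2 * L) * (exp (\<alpha>*a) / 4) / (exp (\<alpha>*R) * (16 * (n / \<nu>) / 2 powr real i))"
    using assms by (simp add: field_simps)
  also have "\<dots> \<le> (n * \<alpha> * 2 * L) * sinh (\<alpha>*a) / ((cosh (\<alpha>*R) - 1) * N)"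
  proof (rule frac_le)
    show "0 \<le> n * \<alpha> * 2 * L * sinh (\<alpha> * a)" using assms \<open>0 < L\<close> by simp
    show "n * \<alpha> * 2 * L * (exp (\<alpha> * a) / 4) \<le> n * \<alpha> * 2 * L * sinh (\<alpha> * a)"
      using assms \<open>0 < L\<close> exp_div_4_le_sinh by (intro mult_left_mono) auto
    show "0 < (cosh (\<alpha> * R) - 1) * N" using cosh_pos assms by simp
    show "(cosh (\<alpha> * R) - 1) * N \<le> exp (\<alpha> * R) * (16 * (n / \<nu>) / 2 powr real i)"
      using cosh_pos assms cosh_minus_one_le_exp[of "\<alpha>*R"] by (intro mult_mono) auto
  qed
  also have "\<dots> = n * kpkvb_f \<alpha> R a 0 * (2 * L * (2 * pi / N))"
  proof -
    have "n * (\<alpha> * s / (2*pi*c)) * (2 * L * (2 * pi / N)) = (n * \<alpha> * 2 * L) * s / (c * N)"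
      if "0 < c" for c s :: real
      using that assms by (simp add: field_simps)
    from this[OF cosh_pos] show ?thesis unfolding kpkvb_f_def by simp
  qed
  finally show ?thesis unfolding L_def .
qed

lemma tile_inner_radius_gt:
  assumes "0 < \<alpha>" and R_ge: "10 / \<alpha> + 40 \<le> kpkvb_R \<nu> n" and i: "i \<le> i_max \<nu> n"
  shows "1 / \<alpha> < kpkvb_R \<nu> n - 2 * (real i + 1) * ln 2"
proof -
  define L where "L = ln (2::real)"
  have "0 < L" "L < 1" unfolding L_def using ln_2_less_1 by auto
  have "0 < 10 / \<alpha>" using assms(1) by simp
  then have "0 \<le> kpkvb_R \<nu> n" using R_ge by linarith
  moreover have "real i \<le> real (i_max \<nu> n)" using i by simp
  ultimately have "real i < 0.9 * kpkvb_R \<nu> n / (2 * L) + 1"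
    using i_max_bounds(2)[of \<nu> n] unfolding L_def by linarith
  then have "2 * L * real i < 0.9 * kpkvb_R \<nu> n + 2 * L"
    using \<open>0 < L\<close> by (simp add: field_simps)
  moreover have "kpkvb_R \<nu> n - 2 * (real i + 1) * L = kpkvb_R \<nu> n - 2 * L * real i - 2 * L"
    "10 / \<alpha> = 10 * (1 / \<alpha>)" by (simp_all add: algebra_simps)
  ultimately show ?thesis
    using R_ge \<open>L < 1\<close> unfolding L_def[symmetric] by linarith
qed

lemma tile_mean_ge:
  fixes \<alpha> \<nu> :: real and n i j :: nat
  assumes "0 < \<alpha>" "\<alpha> < 1/2" "0 < \<nu>" "0 < real n / \<nu>"
    and R_ge: "10 / \<alpha> + 40 \<le> kpkvb_R \<nu> n" and adm: "(i, j) \<in> admissible \<nu> n"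
  shows "emeasure (intensity \<alpha> \<nu> n) (tile \<nu> n i j) < \<infinity>"
    and "\<nu> * \<alpha> * ln 2 / 64 * 2 powr ((1 - 2*\<alpha>) * real i)
           \<le> enn2real (emeasure (intensity \<alpha> \<nu> n) (tile \<nu> n i j))"
proof -
  define R where "R = kpkvb_R \<nu> n"
  define L where "L = ln (2::real)"
  define a where "a = R - 2 * (real i + 1) * L"
  define b where "b = R - 2 * real i * L"
  define N where "N = real (n_tiles \<nu> n i)"
  define t1 where "t1 = 2 * pi * real j / N"
  define t2 where "t2 = 2 * pi * (real j + 1) / N"
  have i: "i \<le> i_max \<nu> n" and j: "j < n_tiles \<nu> n i" using adm by (auto simp: admissible_def)
  have "0 < L" unfolding L_def by simp
  have "20 \<le> 10 / \<alpha>" using assms(1,2) by (simp add: field_simps)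
  then have "0 \<le> R" using R_ge unfolding R_def by linarith
  have a_gt: "1 / \<alpha> < a"
    using tile_inner_radius_gt[OF assms(1) R_ge i] unfolding a_def R_def L_def .
  then have "1 \<le> \<alpha> * a" using assms(1) by (simp add: field_simps)
  have "0 < 1 / \<alpha>" using assms(1) by simp
  with a_gt have "0 \<le> a" by linarith
  have "1 \<le> N" by (simp add: N_def n_tiles_def)
  have tile: "tile \<nu> n i j = {a..<b} \<times> {t1<..t2}"
    unfolding a_def b_def t1_def t2_def N_def R_def L_def using j \<open>0 \<le> a\<close>
    by (intro tile_eq_box) (simp_all add: a_def R_def L_def)
  have ab: "a < b" and t12: "t1 < t2" using \<open>0 < L\<close> \<open>1 \<le> N\<close>
    by (simp_all add: a_def b_def t1_def t2_def divide_strict_right_mono)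
  have in_disk: "{a..<b} \<times> {t1<..t2} \<subseteq> disk (kpkvb_R \<nu> n)"
    unfolding tile[symmetric] tile_def by auto
  note box = emeasure_intensity_box[OF assms(1) \<open>0 \<le> a\<close> ab t12 in_disk]
  have area: "(b - a) * (t2 - t1) = 2 * L * (2 * pi / N)"
    unfolding a_def b_def t1_def t2_def using \<open>1 \<le> N\<close> by (simp add: field_simps)
  show finite: "emeasure (intensity \<alpha> \<nu> n) (tile \<nu> n i j) < \<infinity>"
    unfolding tile using box(2) by (simp add: top.not_eq_extremum le_less_trans)
  have "\<nu> * \<alpha> * L / 64 * 2 powr ((1 - 2*\<alpha>) * real i) \<le> real n * kpkvb_f \<alpha> R a 0 * ((b - a) * (t2 - t1))"
    unfolding area L_def
  proof (rule tile_mean_ge_arith)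
    show "N \<le> 16 * (real n / \<nu>) / 2 powr real i"
      using n_tiles_le[of \<nu> n i] \<open>0 \<le> R\<close> assms(4) i unfolding R_def N_def by simp
    have "a \<le> R" using \<open>0 < L\<close> by (simp add: a_def)
    then show "0 < \<alpha> * R"
      using mult_left_mono[of a R \<alpha>] assms(1) \<open>1 \<le> \<alpha> * a\<close> by linarith
  qed (use assms \<open>1 \<le> \<alpha> * a\<close> \<open>1 \<le> N\<close> in \<open>auto simp: a_def L_def zero_less_divide_iff\<close>)
  also have "\<dots> \<le> enn2real (emeasure (intensity \<alpha> \<nu> n) (tile \<nu> n i j))"
  proof (cases "0 \<le> real n * kpkvb_f \<alpha> R a 0 * ((b - a) * (t2 - t1))")
    case True
    then show ?thesis using enn2real_mono[OF box(1)] finite unfolding tile R_def by simp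
  qed (use enn2real_nonneg[of "emeasure (intensity \<alpha> \<nu> n) (tile \<nu> n i j)"] in linarith)
  finally show "\<nu> * \<alpha> * ln 2 / 64 * 2 powr ((1 - 2*\<alpha>) * real i) \<le> enn2real (emeasure (intensity \<alpha> \<nu> n) (tile \<nu> n i j))"
    unfolding L_def .
qed

lemma top_level_powr_ge:
  assumes "0 \<le> kpkvb_R \<nu> n" "0 < real n / \<nu>" "\<alpha> \<le> 1/2"
  shows "(real n / \<nu>) powr (0.9 * (1 - 2*\<alpha>)) \<le> 2 powr ((1 - 2*\<alpha>) * real (i_max \<nu> n))"
proof -
  let ?y = "kpkvb_R \<nu> n / (2 * ln 2)"
  have "(real n / \<nu>) powr (0.9 * (1 - 2*\<alpha>)) = 2 powr ((1 - 2*\<alpha>) * (0.9 * ?y))"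
    unfolding powr_2_kpkvb_R[OF assms(2), symmetric] powr_powr by (simp only: ac_simps)
  also have "\<dots> \<le> 2 powr ((1 - 2*\<alpha>) * real (i_max \<nu> n))"
    using i_max_bounds(1)[OF assms(1)] assms(3) by (intro powr_mono mult_left_mono) auto
  finally show ?thesis .
qed

lemma half_le_one_minus_exp_neg_one: "1/2 \<le> 1 - exp (-1::real)"
  using exp_ge_add_one_self[of 1] by (simp add: exp_minus field_simps)

lemma exp_neg_moment_tile_count_le:
  fixes \<alpha> \<nu> :: real and n i j :: nat
  assumes "0 < \<alpha>" "\<alpha> < 1/2" "0 < \<nu>" "0 < real n / \<nu>" "10 / \<alpha> + 40 \<le> kpkvb_R \<nu> n"
    and "(i, j) \<in> admissible \<nu> n" "0 < M" "M \<le> \<nu> * \<alpha> * ln 2 / 64 * 2 powr ((1 - 2*\<alpha>) * real i)"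
  shows "exp_neg_moment (pois (enn2real (emeasure (intensity \<alpha> \<nu> n) (tile \<nu> n i j))))
         \<le> ennreal (exp (- (1 - exp (-1)) * M))"
  using tile_mean_ge(2)[OF assms(1-6)] assms(7,8) by (intro exp_neg_moment_pois_le) auto

lemma one_minus_prob_all_top_demands_zero_le:
  fixes \<alpha> \<nu> :: real and n :: nat
  defines "K \<equiv> \<nu> * \<alpha> * ln 2 / 64"
  assumes "0 < \<alpha>" "\<alpha> < 1/2" "0 < \<nu>" "0 < real n / \<nu>"
    and R_ge: "10 / \<alpha> + 40 \<le> kpkvb_R \<nu> n" and "10 \<le> K"
  shows "1 - measure_pmf.prob (tile_counts \<alpha> \<nu> n) (all_top_demands_zero \<nu> n)
         \<le> 64 * exp 2 / \<nu> * real n * exp (- ((1 - exp (-1)) * K) * (real n / \<nu>) powr (0.9 * (1 - 2*\<alpha>)))"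
proof -
  define c where "c = 1 - exp (-1::real)"
  define \<mu> where "\<mu> = (\<lambda>(i, j). enn2real (emeasure (intensity \<alpha> \<nu> n) (tile \<nu> n i j)))"
  define A where "A = admissible \<nu> n"
  define T where "T = n_tiles \<nu> n (i_max \<nu> n)"
  define M where "M = K * (real n / \<nu>) powr (0.9 * (1 - 2*\<alpha>))"
  have "0 < 10 / \<alpha>" using assms(2) by simp
  then have "0 < kpkvb_R \<nu> n" using R_ge by linarith
  then obtain m where m: "i_max \<nu> n = Suc m" using i_max_pos gr0_implies_Suc by blast
  note moment = exp_neg_moment_tile_count_le[OF assms(2-6), folded K_def]
  have "1 - measure_pmf.prob (Pi_pmf A 0 (\<lambda>x. pois (\<mu> x))) {N. \<forall>j<T. demand N (Suc m) j = 0}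
      \<le> real T * (4 * exp 2 * exp (- c * M))"
  proof (rule one_minus_prob_top_demands_zero_le)
    show "finite A" unfolding A_def by (rule finite_admissible)
    show "subtree (Suc m) j \<subseteq> A" if "j < T" for j
      using that \<open>0 < kpkvb_R \<nu> n\<close> subtree_subset_admissible[of \<nu> n "Suc m" j]
      unfolding A_def T_def m by simp
    show "exp_neg_moment (pois (\<mu> x)) \<le> ennreal (exp (-5))" if "x \<in> A" for x
    proof -
      obtain i j where x: "x = (i, j)" by (cases x)
      have "K \<le> K * 2 powr ((1 - 2*\<alpha>) * real i)"
        using assms(3) \<open>10 \<le> K\<close> by (simp add: ge_one_powr_ge_zero)
      then have "10 \<le> K * 2 powr ((1 - 2*\<alpha>) * real i)" using \<open>10 \<le> K\<close> by linarith
      with moment[of i j 10] have "exp_neg_moment (pois (\<mu> x)) \<le> ennreal (exp (- c * 10))"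
        using that unfolding x A_def \<mu>_def c_def by simp
      also have "\<dots> \<le> ennreal (exp (-5))"
        using half_le_one_minus_exp_neg_one by (intro ennreal_leI) (simp add: c_def)
      finally show ?thesis .
    qed
    show "exp_neg_moment (pois (\<mu> (Suc m, j))) \<le> ennreal (exp (- c * M))" if "j < T" for j
    proof (unfold \<mu>_def c_def, simp only: case_prod_conv, rule moment)
      show "(Suc m, j) \<in> admissible \<nu> n" using that unfolding admissible_def T_def m by simp
      show "0 < M" unfolding M_def using \<open>10 \<le> K\<close> assms(4,5)
        by (intro mult_pos_pos) (auto simp: zero_less_divide_iff)
      show "M \<le> K * 2 powr ((1 - 2*\<alpha>) * real (Suc m))"
        unfolding M_def m[symmetric] using top_level_powr_ge[of \<nu> n \<alpha>] assms(3,5) \<open>0 < kpkvb_R \<nu> n\<close> \<open>10 \<le> K\<close>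
        by (intro mult_left_mono) auto
    qed
  qed simp
  moreover have "tile_counts \<alpha> \<nu> n = Pi_pmf A 0 (\<lambda>x. pois (\<mu> x))"
    unfolding tile_counts_def A_def \<mu>_def by (simp add: case_prod_beta')
  moreover have "all_top_demands_zero \<nu> n = {N. \<forall>j<T. demand N (Suc m) j = 0}"
    unfolding all_top_demands_zero_def T_def m ..
  ultimately have "1 - measure_pmf.prob (tile_counts \<alpha> \<nu> n) (all_top_demands_zero \<nu> n)
      \<le> real T * (4 * exp 2 * exp (- c * M))"
    by simp
  also have "\<dots> \<le> 16 * (real n / \<nu>) * (4 * exp 2 * exp (- c * M))"
    using n_tiles_i_max_le \<open>0 < kpkvb_R \<nu> n\<close> assms(5) unfolding T_def
    by (intro mult_right_mono) auto
  also have "\<dots> = 64 * exp 2 / \<nu> * real n * exp (- ((1 - exp (-1)) * K) * (real n / \<nu>) powr (0.9 * (1 - 2*\<alpha>)))"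
    by (simp add: M_def c_def algebra_simps)
  finally show ?thesis .
qed

lemma stretched_exp_decay_smallo:
  fixes C c d \<nu> :: real
  assumes "0 < c" "0 < d" "0 < \<nu>"
  shows "(\<lambda>n::nat. C * real n * exp (- c * (real n / \<nu>) powr d)) \<in> o(\<lambda>n. real n powr (-1/2))"
proof (rule smalloI_tendsto)
  show "((\<lambda>n. C * real n * exp (- c * (real n / \<nu>) powr d) / real n powr (-1/2)) \<longlongrightarrow> 0) sequentially"
    using assms by real_asymp
qed (use eventually_gt_at_top[of 0] in \<open>eventually_elim, simp\<close>)

lemma eventually_kpkvb_R_ge:
  assumes "0 < \<nu>"
  shows "eventually (\<lambda>n. 0 < real n / \<nu> \<and> R0 \<le> kpkvb_R \<nu> n) sequentially"
proof -
  have "eventually (\<lambda>n. \<nu> * exp (R0/2) < real n) sequentially"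
    by real_asymp
  then show ?thesis
  proof (rule eventually_mono)
    fix n assume "\<nu> * exp (R0/2) < real n"
    then have bound: "exp (R0/2) < real n / \<nu>" using assms by (simp add: field_simps)
    then have pos: "0 < real n / \<nu>" using exp_gt_zero[of "R0/2"] by linarith
    have "R0/2 < ln (real n / \<nu>)"
      using ln_less_cancel_iff[OF exp_gt_zero pos] bound by simp
    with pos show "0 < real n / \<nu> \<and> R0 \<le> kpkvb_R \<nu> n"
      by (simp add: kpkvb_R_def)
  qed
qed

theorem mainTheorem13:
  fixes \<alpha> :: real
  assumes "0 < \<alpha>" and "\<alpha> < 1 / 2"
  shows "\<exists>\<nu>0. \<forall>\<nu> \<ge> \<nu>0. 0 < \<nu> \<longrightarrow>
           (\<lambda>n::nat. 1 - measure_pmf.prob (tile_counts \<alpha> \<nu> n) (all_top_demands_zero \<nu> n))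
             \<in> o(\<lambda>n. real n powr (-1/2))"
proof (intro exI allI impI)
  fix \<nu> :: real
  assume "1000 / \<alpha> \<le> \<nu>" "0 < \<nu>"
  define K where "K = \<nu> * \<alpha> * ln 2 / 64"
  define g where "g = (\<lambda>n::nat. 64 * exp 2 / \<nu> * real n
    * exp (- ((1 - exp (-1)) * K) * (real n / \<nu>) powr (0.9 * (1 - 2*\<alpha>))))"
  have "1000 * (2/3) \<le> \<nu> * \<alpha> * ln 2"
    using \<open>1000 / \<alpha> \<le> \<nu>\<close> assms(1) ln2_ge_two_thirds by (intro mult_mono) (auto simp: field_simps)
  then have "10 \<le> K" by (simp add: K_def)
  have "eventually (\<lambda>n. norm (1 - measure_pmf.prob (tile_counts \<alpha> \<nu> n) (all_top_demands_zero \<nu> n))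
      \<le> 1 * norm (g n)) sequentially"
    using eventually_kpkvb_R_ge[OF \<open>0 < \<nu>\<close>, of "10 / \<alpha> + 40"]
  proof eventually_elim
    case (elim n)
    then show ?case
      using one_minus_prob_all_top_demands_zero_le[of \<alpha> \<nu> n] assms \<open>0 < \<nu>\<close> \<open>10 \<le> K\<close>
        measure_pmf.prob_le_1
      by (auto simp: K_def g_def)
  qed
  then have "(\<lambda>n. 1 - measure_pmf.prob (tile_counts \<alpha> \<nu> n) (all_top_demands_zero \<nu> n)) \<in> O(g)"
    by (rule bigoI)
  also have "g \<in> o(\<lambda>n. real n powr (-1/2))"
    unfolding g_def using \<open>10 \<le> K\<close> assms \<open>0 < \<nu>\<close> by (intro stretched_exp_decay_smallo) auto
  finally show "(\<lambda>n. 1 - measure_pmf.prob (tile_counts \<alpha> \<nu> n) (all_top_demands_zero \<nu> n))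
      \<in> o(\<lambda>n. real n powr (-1/2))" .
qed

end
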